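(* For $n,k\ge0$: if $n\equiv 2k+1\pmod 3$ and $n\ge 2k+1$, then with $m=(n-2k-1)/3$, \[ b_{n,k}=\binom{n+1}{m}-3\binom{n}{m-1}; \] otherwise $b_{n,k}=0$.
   Context: The numbers $b_{n,k}$ ($n,k\ge0$) are defined together with $a_{n,k}$ by $a_{0,0}=1$, $b_{0,0}=0$, $a_{0,k}=b_{0,k}=0$ for $k\ge1$, and for $n\ge1$, $k\ge0$: $a_{n,k}=b_{n-1,k-1}+a_{n-1,k+1}$, $b_{n,k}=a_{n-1,k}+b_{n-1,k+1}$, with $b_{n-1,-1}=0$. ($b_{n,k}$ counts partial S-Motzkin paths of length $n$ ending at height $k$ whose last non-down step is a horizontal step.) Binomial coefficients with negative lower index are $0$. *)

theory Defs
  imports Main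
begin

fun ab :: "nat \<Rightarrow> nat \<Rightarrow> nat \<times> nat" where
  "ab 0 k = (if k = 0 then (1, 0) else (0, 0))"
| "ab (Suc n) k =
     ((if k = 0 then 0 else snd (ab n (k - 1))) + fst (ab n (Suc k)),
      fst (ab n k) + snd (ab n (Suc k)))"

definition a_num :: "nat \<Rightarrow> nat \<Rightarrow> nat" where
  "a_num n k = fst (ab n k)"

definition b_num :: "nat \<Rightarrow> nat \<Rightarrow> nat" where
  "b_num n k = snd (ab n k)"

definition binom_int :: "nat \<Rightarrow> int \<Rightarrow> int" where
  "binom_int n j = (if j < 0 then 0 else int (n choose nat j))"

end

theory Submission
  imports Defs
begin

text \<open>Both numbers have closed forms: with \<open>n - 2k = 3m\<close> one has
  \<open>a(n,k) = C(n,m) - 2 C(n,m-1)\<close>, with \<open>n - 2k - 1 = 3m\<close> one has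
  \<open>b(n,k) = C(n+1,m) - 3 C(n,m-1)\<close>, and both vanish when the congruence fails.
  The closed forms satisfy the defining recursion by Pascal's rule, except at the boundary
  \<open>a(n+1,0) = a(n,1)\<close>, which amounts to \<open>C(3j+2, j+1) = 2 C(3j+2, j)\<close>.\<close>

lemma binom_int_neg [simp]: "j < 0 \<Longrightarrow> binom_int n j = 0"
  by (simp add: binom_int_def)

lemma binom_int_Suc: "binom_int (Suc n) j = binom_int n j + binom_int n (j - 1)"
proof -
  consider "j < 0" | "j = 0" | "j > 0" by linarith
  then show ?thesis
  proof cases
    case 3
    then have "nat j = Suc (nat (j - 1))" by simp
    with 3 show ?thesis by (simp add: binom_int_def)
  qed (simp_all add: binom_int_def)
qed

lemma binom_int_Suc_eq_double: "binom_int (3 * j + 2) (int j + 1) = 2 * binom_int (3 * j + 2) (int j)"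
proof -
  have "Suc j * (Suc (j + (2*j+1)) choose Suc j) = Suc (2*j+1) * (Suc (j + (2*j+1)) choose j)"
    by (rule Suc_times_binomial_add)
  then have "Suc j * (3*j+2 choose Suc j) = Suc j * (2 * (3*j+2 choose j))"
    by (simp add: algebra_simps)
  then have "(3*j+2 choose Suc j) = 2 * (3*j+2 choose j)"
    by (subst (asm) mult_left_cancel) auto
  moreover have "nat (int j + 1) = Suc j" by simp
  ultimately show ?thesis by (simp add: binom_int_def del: binomial_Suc_Suc)
qed

definition a_closed :: "nat \<Rightarrow> nat \<Rightarrow> int" where
  "a_closed n k = (if (int n - 2 * int k) mod 3 = 0 then
     (let m = (int n - 2 * int k) div 3 in binom_int n m - 2 * binom_int n (m - 1)) else 0)"

definition b_closed :: "nat \<Rightarrow> nat \<Rightarrow> int" where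
  "b_closed n k = (if (int n - 2 * int k - 1) mod 3 = 0 then
     (let m = (int n - 2 * int k - 1) div 3 in binom_int (n + 1) m - 3 * binom_int n (m - 1)) else 0)"

lemma a_closed_eq:
  "int n - 2 * int k = 3 * m \<Longrightarrow> a_closed n k = binom_int n m - 2 * binom_int n (m - 1)"
  by (simp add: a_closed_def)

lemma b_closed_eq:
  "int n - 2 * int k - 1 = 3 * m \<Longrightarrow> b_closed n k = binom_int (n + 1) m - 3 * binom_int n (m - 1)"
  by (simp add: b_closed_def)

lemma b_closed_Suc: "b_closed (Suc n) k = a_closed n k + b_closed n (Suc k)"
proof (cases "(int n - 2 * int k) mod 3 = 0")
  case True
  then obtain m where m: "int n - 2 * int k = 3 * m" by (metis mod_0_imp_dvd dvdE)
  have "b_closed (Suc n) k = binom_int (Suc (Suc n)) m - 3 * binom_int (Suc n) (m - 1)"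
    using b_closed_eq[of "Suc n" k m] m by simp
  moreover have "a_closed n k = binom_int n m - 2 * binom_int n (m - 1)"
    by (rule a_closed_eq[OF m])
  moreover have "b_closed n (Suc k) = binom_int (n + 1) (m - 1) - 3 * binom_int n (m - 2)"
    using b_closed_eq[of n "Suc k" "m - 1"] m by simp
  ultimately show ?thesis by (simp add: binom_int_Suc algebra_simps)
next
  case False
  moreover have "(int (Suc n) - 2 * int k - 1) mod 3 \<noteq> 0"
    and "(int n - 2 * int (Suc k) - 1) mod 3 \<noteq> 0"
    using False by presburger+
  ultimately show ?thesis by (simp add: a_closed_def b_closed_def)
qed

lemma a_closed_Suc_Suc: "a_closed (Suc n) (Suc k) = b_closed n k + a_closed n (Suc (Suc k))"
proof (cases "(int n - 2 * int k - 1) mod 3 = 0")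
  case True
  then obtain m where m: "int n - 2 * int k - 1 = 3 * m" by (metis mod_0_imp_dvd dvdE)
  have "a_closed (Suc n) (Suc k) = binom_int (Suc n) m - 2 * binom_int (Suc n) (m - 1)"
    using a_closed_eq[of "Suc n" "Suc k" m] m by simp
  moreover have "b_closed n k = binom_int (Suc n) m - 3 * binom_int n (m - 1)"
    using b_closed_eq[OF m] by simp
  moreover have "a_closed n (Suc (Suc k)) = binom_int n (m - 1) - 2 * binom_int n (m - 2)"
    using a_closed_eq[of n "Suc (Suc k)" "m - 1"] m by simp
  ultimately show ?thesis by (simp add: binom_int_Suc algebra_simps)
next
  case False
  moreover have "(int (Suc n) - 2 * int (Suc k)) mod 3 \<noteq> 0"
    and "(int n - 2 * int (Suc (Suc k))) mod 3 \<noteq> 0"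
    using False by presburger+
  ultimately show ?thesis by (simp add: a_closed_def b_closed_def)
qed

lemma a_closed_Suc_0: "a_closed (Suc n) 0 = a_closed n 1"
proof (cases "n mod 3 = 2")
  case True
  then obtain j where n: "n = 3 * j + 2" by (metis div_mod_decomp add.commute mult.commute)
  have "a_closed (Suc n) 0 = binom_int (Suc n) (int j + 1) - 2 * binom_int (Suc n) (int j)"
    using a_closed_eq[of "Suc n" 0 "int j + 1"] n by simp
  moreover have "a_closed n 1 = binom_int n (int j) - 2 * binom_int n (int j - 1)"
    using a_closed_eq[of n 1 "int j"] n by simp
  moreover have "binom_int n (int j + 1) = 2 * binom_int n (int j)"
    using binom_int_Suc_eq_double n by simp
  ultimately show ?thesis by (simp add: binom_int_Suc)
next
  case False
  moreover have "(int (Suc n) - 2 * int 0) mod 3 \<noteq> 0" and "(int n - 2 * int 1) mod 3 \<noteq> 0"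
    using False by presburger+
  ultimately show ?thesis by (simp add: a_closed_def)
qed

lemma ab_eq_closed: "int (a_num n k) = a_closed n k \<and> int (b_num n k) = b_closed n k"
proof (induction n arbitrary: k)
  case 0
  show ?case
    by (cases "k = 0") (auto simp: a_num_def b_num_def a_closed_def b_closed_def Let_def binom_int_def)
next
  case (Suc n)
  then show ?case
    by (cases k) (auto simp: a_num_def b_num_def a_closed_Suc_0 a_closed_Suc_Suc b_closed_Suc)
qed

theorem mainTheorem10:
  fixes n k :: nat
  shows "int (b_num n k) =
    (if n mod 3 = (2 * k + 1) mod 3 \<and> n \<ge> 2 * k + 1
     then (let m = (int n - 2 * int k - 1) div 3 in
             binom_int (n + 1) m - 3 * binom_int n (m - 1))
     else 0)"
proof -
  have "(n mod 3 = (2 * k + 1) mod 3) = ((int n - 2 * int k - 1) mod 3 = 0)"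
    by presburger
  moreover have "(int n - 2 * int k - 1) div 3 < 0" if "\<not> n \<ge> 2 * k + 1"
    using that by simp
  ultimately show ?thesis
    using ab_eq_closed[of n k] by (auto simp: b_closed_def Let_def)
qed

end
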